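(* Let $X$ be a finite, simple, connected $3$-valent plane graph such that the number of edges surrounding each face is divisible by $3$. Then $V(X)$ admits a coloring by two colors, black and white, such that: (C-i) every black vertex is adjacent to three white vertices; (C-ii) every white vertex is adjacent to exactly one black vertex (so its other two neighbours are white); (C-iii) for any pair of black vertices $x,y$ at graph distance $3$ from each other, there is a path from $x$ to $y$ of length $3$ which either turns left at both of its interior vertices or turns right at both of its interior vertices.
   Context: In a $3$-valent plane graph, a path $\dots,u,v,w,\dots$ arriving at $v$ along the edge $uv$ and leaving along the edge $vw\neq uv$ turns right (resp. left) at $v$ according as $vw$ is the edge following $uv$ in the clockwise (resp. counterclockwise) order of the three edges around $v$ determined by the plane embedding. *)

theory Defs
  imports Main
begin

text \<open>A 3-valent plane graph is encoded combinatorially: a finite vertex set V,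
a symmetric irreflexive adjacency relation E, and a rotation system rho, where
rho v u is the neighbour of v following u in the CLOCKWISE order of the three
edges around v given by the plane embedding.  Planarity is the genus-0
condition (Euler's formula V - E + F = 2) for the faces traced by the rotation
system.\<close>

definition nbrs :: "('v \<Rightarrow> 'v \<Rightarrow> bool) \<Rightarrow> 'v \<Rightarrow> 'v set" where
  "nbrs E v = {u. E v u}"

definition darts :: "('v \<Rightarrow> 'v \<Rightarrow> bool) \<Rightarrow> ('v \<times> 'v) set" where
  "darts E = {(u, v). E u v}"

definition face_step :: "('v \<Rightarrow> 'v \<Rightarrow> 'v) \<Rightarrow> 'v \<times> 'v \<Rightarrow> 'v \<times> 'v" where
  "face_step rho d = (snd d, rho (snd d) (fst d))"

definition face_of :: "('v \<Rightarrow> 'v \<Rightarrow> 'v) \<Rightarrow> 'v \<times> 'v \<Rightarrow> ('v \<times> 'v) set" where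
  "face_of rho d = {(face_step rho ^^ n) d | n. True}"

definition faces :: "('v \<Rightarrow> 'v \<Rightarrow> bool) \<Rightarrow> ('v \<Rightarrow> 'v \<Rightarrow> 'v) \<Rightarrow> ('v \<times> 'v) set set" where
  "faces E rho = face_of rho ` darts E"

definition simple_cubic_rotation_graph ::
    "'v set \<Rightarrow> ('v \<Rightarrow> 'v \<Rightarrow> bool) \<Rightarrow> ('v \<Rightarrow> 'v \<Rightarrow> 'v) \<Rightarrow> bool" where
  "simple_cubic_rotation_graph V E rho \<longleftrightarrow>
     finite V \<and>
     (\<forall>u v. E u v \<longrightarrow> u \<in> V \<and> v \<in> V) \<and>
     (\<forall>u v. E u v \<longrightarrow> E v u) \<and>
     (\<forall>v. \<not> E v v) \<and>
     (\<forall>v\<in>V. card (nbrs E v) = 3) \<and>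
     (\<forall>v\<in>V. \<forall>u\<in>nbrs E v. nbrs E v = {u, rho v u, rho v (rho v u)})"

definition connected_graph :: "'v set \<Rightarrow> ('v \<Rightarrow> 'v \<Rightarrow> bool) \<Rightarrow> bool" where
  "connected_graph V E \<longleftrightarrow> V \<noteq> {} \<and> (\<forall>u\<in>V. \<forall>v\<in>V. E\<^sup>*\<^sup>* u v)"

definition plane_rotation :: "'v set \<Rightarrow> ('v \<Rightarrow> 'v \<Rightarrow> bool) \<Rightarrow> ('v \<Rightarrow> 'v \<Rightarrow> 'v) \<Rightarrow> bool" where
  "plane_rotation V E rho \<longleftrightarrow>
     int (card V) - int (card (darts E) div 2) + int (card (faces E rho)) = 2"

definition cubic_plane_graph :: "'v set \<Rightarrow> ('v \<Rightarrow> 'v \<Rightarrow> bool) \<Rightarrow> ('v \<Rightarrow> 'v \<Rightarrow> 'v) \<Rightarrow> bool" where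
  "cubic_plane_graph V E rho \<longleftrightarrow>
     simple_cubic_rotation_graph V E rho \<and> connected_graph V E \<and> plane_rotation V E rho"

text \<open>Number of edges surrounding a face = length of its boundary walk.\<close>
definition face_length :: "('v \<times> 'v) set \<Rightarrow> nat" where
  "face_length f = card f"

definition graph_dist :: "('v \<Rightarrow> 'v \<Rightarrow> bool) \<Rightarrow> 'v \<Rightarrow> 'v \<Rightarrow> nat" where
  "graph_dist E x y = (LEAST n. (E ^^ n) x y)"

text \<open>Path u,v,w turns right at v iff vw follows vu clockwise; left iff counterclockwise.\<close>
definition turns_right :: "('v \<Rightarrow> 'v \<Rightarrow> 'v) \<Rightarrow> 'v \<Rightarrow> 'v \<Rightarrow> 'v \<Rightarrow> bool" where
  "turns_right rho u v w \<longleftrightarrow> w = rho v u"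

definition turns_left :: "('v \<Rightarrow> 'v \<Rightarrow> 'v) \<Rightarrow> 'v \<Rightarrow> 'v \<Rightarrow> 'v \<Rightarrow> bool" where
  "turns_left rho u v w \<longleftrightarrow> rho v w = u"

end

theory Submission
  imports Defs Complex_Main "HOL-Combinatorics.Transposition"
begin

(*
  Label every dart (u, v) by a state (c, p) with c in Z/3 and p in the Klein
  four-group K: rotating a dart clockwise about its tail adds 1 to c, and
  reversing it adds to p the non-zero element k(c) of K.  These rules define a
  covering of the rotation system.  Three consecutive steps along a face add 3
  to c and k(c) + k(c + 1) + k(c + 2) = 0 to p, so when all faces have length
  divisible by 3 every face lifts to faces of the same length.  The Euler
  inequality V - E + F <= 2 for a connected component of the covering with n
  sheets then reads n(V - E + F) <= 2, i.e. 2n <= 2: the covering is trivial and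
  each dart carries a unique state.  Its c-part is a 3-edge-colouring advancing
  clockwise around every vertex, and its p-part is constant around a vertex,
  giving a potential P on vertices with P(w) = P(u) + k(c(u, w)).  The black
  vertices are those with P = 0; the three conditions follow because k maps
  Z/3 bijectively onto the non-zero elements of K.
*)

section \<open>Cycles of an injective map on a finite invariant set\<close>

definition cycle_of :: "('a \<Rightarrow> 'a) \<Rightarrow> 'a \<Rightarrow> 'a set" where
  "cycle_of f x = range (\<lambda>n. (f ^^ n) x)"

definition period :: "('a \<Rightarrow> 'a) \<Rightarrow> 'a \<Rightarrow> nat" where
  "period f x = (LEAST n. 0 < n \<and> (f ^^ n) x = x)"

definition num_cycles :: "('a \<Rightarrow> 'a) \<Rightarrow> 'a set \<Rightarrow> nat" where
  "num_cycles f S = card (cycle_of f ` S)"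

lemma funpow_in_invariant: "f ` S \<subseteq> S \<Longrightarrow> x \<in> S \<Longrightarrow> (f ^^ n) x \<in> S"
  by (induction n) auto

lemma cycle_of_subset: "f ` S \<subseteq> S \<Longrightarrow> x \<in> S \<Longrightarrow> cycle_of f x \<subseteq> S"
  unfolding cycle_of_def using funpow_in_invariant[of f S x] by auto

lemma funpow_in_cycle_of: "(f ^^ n) x \<in> cycle_of f x"
  unfolding cycle_of_def by blast

lemma self_in_cycle_of: "x \<in> cycle_of f x"
  using funpow_in_cycle_of[where n=0] by simp

lemma apply_in_cycle_of: "f x \<in> cycle_of f x"
  using funpow_in_cycle_of[where n=1] by simp

lemma cycle_of_trans:
  assumes "y \<in> cycle_of f x" "z \<in> cycle_of f y"
  shows "z \<in> cycle_of f x"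
proof -
  obtain m n where "y = (f ^^ m) x" "z = (f ^^ n) y"
    using assms unfolding cycle_of_def by blast
  then have "z = (f ^^ (n + m)) x" by (simp add: funpow_add)
  then show ?thesis by (simp add: funpow_in_cycle_of)
qed

lemma cycle_of_eq_funpow_lessThan:
  assumes "(f ^^ p) x = x" "0 < p"
  shows "cycle_of f x = (\<lambda>n. (f ^^ n) x) ` {..<p}"
proof (intro equalityI subsetI)
  fix z assume "z \<in> cycle_of f x"
  then obtain n where "z = (f ^^ n) x" by (auto simp: cycle_of_def)
  then have "z = (f ^^ (n mod p)) x"
    using funpow_mod_eq[OF assms(1)] by simp
  then show "z \<in> (\<lambda>n. (f ^^ n) x) ` {..<p}"
    using assms(2) by auto
qed (auto simp: cycle_of_def)

lemma cycle_of_eq_funpow_atLeastAtMost: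
  assumes "(f ^^ p) x = x" "0 < p"
  shows "cycle_of f x = (\<lambda>n. (f ^^ n) x) ` {1..p}"
proof -
  have "{..<p} = insert 0 {1..<p}" "{1..p} = insert p {1..<p}"
    using assms(2) by auto
  then show ?thesis
    using cycle_of_eq_funpow_lessThan[OF assms] assms(1) by simp
qed

lemma cycle_of_period2:
  assumes "(f ^^ 2) x = x"
  shows "cycle_of f x = {x, f x}"
proof -
  have "{..<2::nat} = {0, 1}" by auto
  then show ?thesis using assms by (simp add: cycle_of_eq_funpow_lessThan)
qed

lemma cycle_of_period3:
  assumes "(f ^^ 3) x = x"
  shows "cycle_of f x = {x, f x, f (f x)}"
proof -
  have "{..<3::nat} = {0, 1, 2}" by auto
  then show ?thesis using assms by (simp add: cycle_of_eq_funpow_lessThan numeral_2_eq_2)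
qed

context
  fixes f :: "'a \<Rightarrow> 'a" and S :: "'a set"
  assumes inj: "inj f" and fin: "finite S" and inv: "f ` S \<subseteq> S"
begin

lemma period:
  assumes "x \<in> S"
  shows "0 < period f x" "(f ^^ period f x) x = x"
    and "\<And>m. 0 < m \<Longrightarrow> m < period f x \<Longrightarrow> (f ^^ m) x \<noteq> x"
proof -
  have "{y. \<exists>n. y = (f ^^ n) x} \<subseteq> S"
    using funpow_in_invariant[OF inv assms] by auto
  then have "finite {y. \<exists>n. y = (f ^^ n) x}"
    using fin by (rule finite_subset)
  then obtain n where "0 < n \<and> (f ^^ n) x = x"
    using funpow_inj_finite[OF inj] by metis
  then have "0 < period f x \<and> (f ^^ period f x) x = x"
    unfolding period_def by (rule LeastI)
  then show "0 < period f x" "(f ^^ period f x) x = x" by auto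
  show "\<And>m. 0 < m \<Longrightarrow> m < period f x \<Longrightarrow> (f ^^ m) x \<noteq> x"
    unfolding period_def using not_less_Least by blast
qed

lemma period_dvd:
  assumes "x \<in> S" "(f ^^ n) x = x"
  shows "period f x dvd n"
proof -
  have "(f ^^ (n mod period f x)) x = x"
    using funpow_mod_eq[OF period(2)[OF assms(1)]] assms(2) by simp
  then have "n mod period f x = 0"
    using period(1,3)[OF assms(1)] by (meson mod_less_divisor neq0_conv)
  then show ?thesis by auto
qed

lemma card_cycle_of:
  assumes "x \<in> S"
  shows "card (cycle_of f x) = period f x"
proof -
  note P = period[OF assms]
  have "inj_on (\<lambda>n. (f ^^ n) x) {..<period f x}"
    using inj_on_funpow_least[of "period f x" f x] P by (simp add: lessThan_atLeast0)
  then show ?thesis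
    using cycle_of_eq_funpow_lessThan[OF P(2,1)] by (simp add: card_image)
qed

lemma cycle_of_sym:
  assumes "x \<in> S" "y \<in> cycle_of f x"
  shows "x \<in> cycle_of f y"
proof -
  obtain n where y: "y = (f ^^ n) x"
    using assms(2) by (auto simp: cycle_of_def)
  define p where "p = period f x"
  have "n \<le> p * n"
    using period(1)[OF assms(1)] by (simp add: p_def)
  have "(f ^^ (p * n - n)) y = (f ^^ (p * n - n + n)) x"
    by (simp add: y funpow_add)
  also have "\<dots> = (f ^^ (p * n)) x"
    using \<open>n \<le> p * n\<close> by simp
  also have "\<dots> = x"
    using funpow_mod_eq[OF period(2)[OF assms(1)], of "p * n"] by (simp add: p_def)
  finally show ?thesis
    by (metis funpow_in_cycle_of)
qed

lemma cycle_of_eq: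
  assumes "x \<in> S" "y \<in> cycle_of f x"
  shows "cycle_of f y = cycle_of f x"
  using cycle_of_trans[OF assms(2)] cycle_of_trans[OF cycle_of_sym[OF assms]] by blast

lemma cycle_of_disjoint:
  assumes "y \<in> S" "y \<notin> cycle_of f x"
  shows "x \<notin> cycle_of f y"
  using assms cycle_of_sym by blast

end

lemma cycle_of_cong:
  assumes "\<And>w. w \<in> cycle_of f z \<Longrightarrow> g w = f w"
  shows "cycle_of g z = cycle_of f z"
proof -
  have "(g ^^ n) z = (f ^^ n) z" for n
    by (induction n) (simp_all add: assms funpow_in_cycle_of)
  then show ?thesis by (simp add: cycle_of_def)
qed

section \<open>Composing with a transposition\<close>

lemma comp_transpose_invariant:
  "x \<in> S \<Longrightarrow> y \<in> S \<Longrightarrow> f ` S \<subseteq> S \<Longrightarrow> (f \<circ> transpose x y) ` S \<subseteq> S"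
  by (auto simp: transpose_def)

lemma funpow_comp_transpose:
  assumes "f (transpose x y w) = f z" "0 < j"
    and "\<And>i. 0 < i \<Longrightarrow> i < j \<Longrightarrow> (f ^^ i) z \<noteq> x \<and> (f ^^ i) z \<noteq> y"
  shows "((f \<circ> transpose x y) ^^ j) w = (f ^^ j) z"
  using assms(2,3)
proof (induction j)
  case (Suc j)
  show ?case
  proof (cases "j = 0")
    case False
    then have "(f ^^ j) z \<noteq> x" "(f ^^ j) z \<noteq> y" using Suc.prems(2)[of j] by auto
    then show ?thesis using Suc False by simp
  qed (simp add: assms(1))
qed simp

context
  fixes f :: "'a \<Rightarrow> 'a" and x :: 'a and L m :: nat
  assumes period_L: "(f ^^ L) x = x" and m: "0 < m" "m < L"
    and distinct: "\<And>i j. i < L \<Longrightarrow> j < L \<Longrightarrow> i \<noteq> j \<Longrightarrow> (f ^^ i) x \<noteq> (f ^^ j) x"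
begin

lemma cycle_of_comp_transpose_upto:
  "cycle_of (f \<circ> transpose x ((f ^^ m) x)) ((f ^^ m) x) = (\<lambda>i. (f ^^ i) x) ` {1..m}"
proof -
  let ?g = "f \<circ> transpose x ((f ^^ m) x)"
  have iter: "(?g ^^ j) ((f ^^ m) x) = (f ^^ j) x" if "0 < j" "j \<le> m" for j
  proof (rule funpow_comp_transpose)
    fix i assume "0 < i" "i < j"
    then show "(f ^^ i) x \<noteq> x \<and> (f ^^ i) x \<noteq> (f ^^ m) x"
      using distinct[of i 0] distinct[of i m] that m by auto
  qed (use that in simp_all)
  then have "cycle_of ?g ((f ^^ m) x) = (\<lambda>n. (?g ^^ n) ((f ^^ m) x)) ` {1..m}"
    using m(1) by (intro cycle_of_eq_funpow_atLeastAtMost) auto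
  also have "\<dots> = (\<lambda>i. (f ^^ i) x) ` {1..m}" using iter by (intro image_cong) auto
  finally show ?thesis .
qed

lemma cycle_of_comp_transpose_from:
  "cycle_of (f \<circ> transpose x ((f ^^ m) x)) x = (\<lambda>i. (f ^^ i) x) ` {m+1..L}"
proof -
  let ?g = "f \<circ> transpose x ((f ^^ m) x)"
  have iter: "(?g ^^ j) x = (f ^^ (m + j)) x" if "0 < j" "j \<le> L - m" for j
  proof -
    have "(?g ^^ j) x = (f ^^ j) ((f ^^ m) x)"
    proof (rule funpow_comp_transpose)
      fix i assume "0 < i" "i < j"
      then show "(f ^^ i) ((f ^^ m) x) \<noteq> x \<and> (f ^^ i) ((f ^^ m) x) \<noteq> (f ^^ m) x"
        using distinct[of "i + m" 0] distinct[of "i + m" m] that m by (auto simp: funpow_add)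
    qed (use that in simp_all)
    then show ?thesis by (simp add: funpow_add add.commute)
  qed
  then have "(?g ^^ (L - m)) x = x" using m(2) period_L by simp
  then have "cycle_of ?g x = (\<lambda>n. (?g ^^ n) x) ` {1..L-m}"
    using m(2) by (intro cycle_of_eq_funpow_atLeastAtMost) auto
  also have "\<dots> = (\<lambda>j. (f ^^ (m + j)) x) ` {1..L-m}" using iter by (intro image_cong) auto
  also have "\<dots> = (\<lambda>i. (f ^^ i) x) ` ((\<lambda>j. m + j) ` {1..L-m})" by (simp only: image_image)
  also have "(\<lambda>j. m + j) ` {1..L-m} = {m+1..L}" using m(2) by simp
  finally show ?thesis .
qed

end

lemma cycle_of_comp_transpose_split:
  assumes "inj f" "finite S" "f ` S \<subseteq> S" "x \<in> S" "x \<noteq> y" "y \<in> cycle_of f x"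
  defines "g \<equiv> f \<circ> transpose x y"
  shows "cycle_of g x \<union> cycle_of g y = cycle_of f x" "y \<notin> cycle_of g x"
proof -
  note P = period[OF assms(1-4)]
  define L where "L = period f x"
  obtain m where m: "m < L" "y = (f ^^ m) x"
    using cycle_of_eq_funpow_lessThan[OF P(2,1)] assms(6) unfolding L_def by auto
  have m0: "0 < m" using m assms(5) by (cases m) auto
  have fLx: "(f ^^ L) x = x" using P L_def by simp
  have "inj_on (\<lambda>k. (f ^^ k) x) {0..<L}"
    by (rule inj_on_funpow_least) (use P in \<open>auto simp: L_def\<close>)
  then have distinct: "(f ^^ i) x \<noteq> (f ^^ j) x" if "i < L" "j < L" "i \<noteq> j" for i j
    using that by (auto dest: inj_onD)
  have cycle_y: "cycle_of g y = (\<lambda>i. (f ^^ i) x) ` {1..m}"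
    using cycle_of_comp_transpose_upto[OF fLx m0 m(1) distinct] by (simp add: g_def m(2))
  have cycle_x: "cycle_of g x = (\<lambda>i. (f ^^ i) x) ` {m+1..L}"
    using cycle_of_comp_transpose_from[OF fLx m0 m(1) distinct] by (simp add: g_def m(2))
  have cycle_f: "cycle_of f x = (\<lambda>i. (f ^^ i) x) ` {1..L}"
    using cycle_of_eq_funpow_atLeastAtMost[OF fLx] P L_def by simp
  have "{m+1..L} \<union> {1..m} = {1..L}" using m(1) by auto
  then show "cycle_of g x \<union> cycle_of g y = cycle_of f x"
    unfolding cycle_x cycle_y cycle_f by (metis image_Un)
  show "y \<notin> cycle_of g x"
  proof
    assume "y \<in> cycle_of g x"
    then obtain i where i: "i \<in> {m+1..L}" "y = (f ^^ i) x" unfolding cycle_x by auto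
    show False
    proof (cases "i = L")
      case True
      then show False using i fLx assms(5) by simp
    next
      case False
      then show False using distinct[of i m] i m by auto
    qed
  qed
qed

lemma inj_comp_transpose: "inj f \<Longrightarrow> inj (f \<circ> transpose x y)"
  by (simp add: inj_compose inj_transpose)

lemma num_cycles_comp_transpose_same_cycle:
  assumes "inj f" "finite S" "f ` S \<subseteq> S" "x \<in> S" "x \<noteq> y" "y \<in> cycle_of f x"
  shows "num_cycles (f \<circ> transpose x y) S = Suc (num_cycles f S)"
proof -
  define g where "g = f \<circ> transpose x y"
  define A where "A = cycle_of f x"
  have yS: "y \<in> S" using cycle_of_subset[OF assms(3,4)] assms(6) by blast
  have gS: "g ` S \<subseteq> S" unfolding g_def by (rule comp_transpose_invariant[OF assms(4) yS assms(3)])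
  note parts = cycle_of_comp_transpose_split[OF assms, folded g_def A_def]
  have outside: "x \<notin> cycle_of f z" "y \<notin> cycle_of f z" if "z \<in> S - A" for z
    using that cycle_of_sym[OF assms(1-3)] cycle_of_trans[OF assms(6)] unfolding A_def by blast+
  have same: "cycle_of g z = cycle_of f z" if "z \<in> S - A" for z
  proof (rule cycle_of_cong)
    fix w assume "w \<in> cycle_of f z"
    then have "w \<noteq> x" "w \<noteq> y" using outside[OF that] by auto
    then show "g w = f w" by (simp add: g_def)
  qed
  have cycles_g: "cycle_of g ` S = cycle_of f ` (S - A) \<union> {cycle_of g x, cycle_of g y}"
  proof (intro equalityI subsetI)
    fix W assume "W \<in> cycle_of g ` S"
    then obtain z where z: "z \<in> S" "W = cycle_of g z" by auto
    show "W \<in> cycle_of f ` (S - A) \<union> {cycle_of g x, cycle_of g y}"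
    proof (cases "z \<in> A")
      case True
      then have "z \<in> cycle_of g x \<or> z \<in> cycle_of g y" using parts(1) by blast
      then show ?thesis
        using cycle_of_eq[OF inj_comp_transpose[OF assms(1)] assms(2) gS[unfolded g_def]]
          assms(4) yS z
        unfolding g_def by blast
    next
      case False
      then show ?thesis using same z by auto
    qed
  qed (use same assms(4) yS in auto)
  have cycles_f: "cycle_of f ` S = cycle_of f ` (S - A) \<union> {A}"
    using cycle_of_eq[OF assms(1-4)] assms(4) unfolding A_def by blast
  have "cycle_of g x \<noteq> cycle_of g y" "cycle_of g x \<notin> cycle_of f ` (S - A)"
    "cycle_of g y \<notin> cycle_of f ` (S - A)" "A \<notin> cycle_of f ` (S - A)"
    using parts(2) outside self_in_cycle_of unfolding A_def by (metis imageE)+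
  then show ?thesis
    unfolding num_cycles_def g_def[symmetric] cycles_g cycles_f using assms(2)
    by (simp add: card_insert_if)
qed

lemma in_cycle_of_comp_transpose:
  assumes "inj f" "finite S" "f ` S \<subseteq> S" "y \<in> S" "x \<noteq> y" "y \<notin> cycle_of f x"
  shows "y \<in> cycle_of (f \<circ> transpose x y) x"
proof -
  define g where "g = f \<circ> transpose x y"
  note P = period[OF assms(1-4)]
  define p where "p = period f y"
  have "x \<notin> cycle_of f y" using cycle_of_disjoint[OF assms(1-4,6)] .
  have "(g ^^ p) x = (f ^^ p) y"
    unfolding g_def
  proof (rule funpow_comp_transpose)
    fix i assume "0 < i" "i < p"
    then show "(f ^^ i) y \<noteq> x \<and> (f ^^ i) y \<noteq> y"
      using P(3)[of i] \<open>x \<notin> cycle_of f y\<close> funpow_in_cycle_of p_def by metis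
  qed (use P p_def in simp_all)
  then have "(g ^^ p) x = y" using P p_def by simp
  then show ?thesis unfolding g_def by (metis funpow_in_cycle_of)
qed

lemma num_cycles_comp_transpose_other_cycle:
  assumes "inj f" "finite S" "f ` S \<subseteq> S" "x \<in> S" "y \<in> S" "x \<noteq> y" "y \<notin> cycle_of f x"
  shows "num_cycles f S = Suc (num_cycles (f \<circ> transpose x y) S)"
proof -
  define g where "g = f \<circ> transpose x y"
  have "g \<circ> transpose x y = f" by (simp add: g_def comp_assoc)
  moreover have "num_cycles (g \<circ> transpose x y) S = Suc (num_cycles g S)"
    using num_cycles_comp_transpose_same_cycle[OF inj_comp_transpose[OF assms(1)] assms(2)
        comp_transpose_invariant[OF assms(4,5,3)] assms(4,6)
        in_cycle_of_comp_transpose[OF assms(1-3,5-7)]]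
    unfolding g_def .
  ultimately show ?thesis by (simp add: g_def)
qed

lemma num_cycles_comp_transpose_le:
  assumes "inj f" "finite S" "f ` S \<subseteq> S" "x \<in> S" "y \<in> S" "x \<noteq> y"
  shows "num_cycles (f \<circ> transpose x y) S \<le> Suc (num_cycles f S)"
  using num_cycles_comp_transpose_same_cycle[OF assms(1-4,6)]
    num_cycles_comp_transpose_other_cycle[OF assms] by (cases "y \<in> cycle_of f x") auto

lemma num_cycles_le_card: "finite S \<Longrightarrow> num_cycles f S \<le> card S"
  unfolding num_cycles_def by (rule card_image_le)

lemma num_cycles_Un:
  assumes "finite A" "finite B" "A \<inter> B = {}" "f ` A \<subseteq> A" "f ` B \<subseteq> B"
  shows "num_cycles f (A \<union> B) = num_cycles f A + num_cycles f B"
proof -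
  have "cycle_of f ` A \<inter> cycle_of f ` B = {}"
  proof (rule ccontr)
    assume "cycle_of f ` A \<inter> cycle_of f ` B \<noteq> {}"
    then obtain p q where "p \<in> A" "q \<in> B" "cycle_of f p = cycle_of f q" by auto
    then have "p \<in> cycle_of f q" using self_in_cycle_of by metis
    then show False using cycle_of_subset[OF assms(5) \<open>q \<in> B\<close>] \<open>p \<in> A\<close> assms(3) by blast
  qed
  then show ?thesis
    unfolding num_cycles_def image_Un using assms(1,2) by (simp add: card_Un_disjoint)
qed

lemma num_cycles_fixing:
  assumes "finite S" "\<forall>z\<in>S. f z = z"
  shows "num_cycles f S = card S"
proof -
  have "cycle_of f z = {z}" if "z \<in> S" for z
  proof -
    have "(f ^^ n) z = z" for n using that assms(2) by (induction n) auto
    then show ?thesis unfolding cycle_of_def by auto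
  qed
  then have "cycle_of f ` S = (\<lambda>z. {z}) ` S" by auto
  moreover have "inj_on (\<lambda>z. {z}) S" by (auto intro: inj_onI)
  ultimately show ?thesis unfolding num_cycles_def by (simp add: card_image)
qed

text \<open>Each cycle \<open>W\<close> contributes \<open>|W| \<cdot> 1/|W| = 1\<close>.\<close>

lemma num_cycles_eq_sum:
  assumes "inj f" "finite S" "f ` S \<subseteq> S"
  shows "real (num_cycles f S) = (\<Sum>z\<in>S. 1 / real (card (cycle_of f z)))"
proof -
  have "(\<Sum>z\<in>S. 1 / real (card (cycle_of f z))) =
        (\<Sum>W\<in>cycle_of f ` S. \<Sum>z\<in>{z\<in>S. cycle_of f z = W}. 1 / real (card (cycle_of f z)))"
    by (rule sum.image_gen[OF assms(2)])
  also have "\<dots> = (\<Sum>W\<in>cycle_of f ` S. 1)"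
  proof (rule sum.cong[OF refl])
    fix W assume "W \<in> cycle_of f ` S"
    then obtain w where w: "w \<in> S" "W = cycle_of f w" by auto
    have WS: "W \<subseteq> S" using cycle_of_subset[OF assms(3) w(1)] w(2) by simp
    have eq: "{z\<in>S. cycle_of f z = W} = W"
    proof (intro equalityI subsetI)
      fix z assume "z \<in> {z\<in>S. cycle_of f z = W}"
      then show "z \<in> W" using self_in_cycle_of[of z f] by auto
    next
      fix z assume "z \<in> W"
      then show "z \<in> {z\<in>S. cycle_of f z = W}"
        using cycle_of_eq[OF assms w(1)] w(2) WS by auto
    qed
    have "finite W" using WS assms(2) finite_subset by blast
    moreover have "W \<noteq> {}" using w(2) self_in_cycle_of[of w f] by auto
    moreover have "(\<Sum>z\<in>W. 1 / real (card (cycle_of f z))) = (\<Sum>z\<in>W. 1 / real (card W))"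
    proof (rule sum.cong[OF refl])
      fix z assume "z \<in> W"
      then show "1 / real (card (cycle_of f z)) = 1 / real (card W)"
        using cycle_of_eq[OF assms w(1)] w(2) by simp
    qed
    ultimately show "(\<Sum>z\<in>{z\<in>S. cycle_of f z = W}. 1 / real (card (cycle_of f z))) = 1"
      unfolding eq by simp
  qed
  finally show ?thesis by (simp add: num_cycles_def)
qed

lemma num_cycles_uniform:
  assumes "inj f" "finite S" "f ` S \<subseteq> S" "\<And>z. z \<in> S \<Longrightarrow> card (cycle_of f z) = c"
  shows "real (num_cycles f S) = real (card S) / real c"
  using num_cycles_eq_sum[OF assms(1-3)] assms(4) by simp

section \<open>An Euler inequality for pairs of permutations\<close>

definition gen_step :: "('a \<Rightarrow> 'a) \<Rightarrow> ('a \<Rightarrow> 'a) \<Rightarrow> 'a \<Rightarrow> 'a \<Rightarrow> bool" where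
  "gen_step a b u v \<longleftrightarrow> v = a u \<or> v = b u"

definition gen_connected :: "('a \<Rightarrow> 'a) \<Rightarrow> ('a \<Rightarrow> 'a) \<Rightarrow> 'a set \<Rightarrow> bool" where
  "gen_connected a b S \<longleftrightarrow> (\<forall>x\<in>S. \<forall>y\<in>S. (gen_step a b)\<^sup>*\<^sup>* x y)"

lemma rtranclp_funpow: "(\<And>u. R u (f u)) \<Longrightarrow> R\<^sup>*\<^sup>* z ((f ^^ n) z)"
  by (induction n) (auto intro: rtranclp.rtrancl_into_rtrancl)

lemma gen_reach_closed:
  assumes "a ` S \<subseteq> S" "b ` S \<subseteq> S" "(gen_step a b)\<^sup>*\<^sup>* u v" "u \<in> S"
  shows "v \<in> S"
  using assms(3,4) by (induction rule: rtranclp_induct) (use assms(1,2) in \<open>auto simp: gen_step_def\<close>)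

lemma rtranclp_if_in_cycle_of: "(\<And>u. R u (f u)) \<Longrightarrow> y \<in> cycle_of f x \<Longrightarrow> R\<^sup>*\<^sup>* x y"
  using rtranclp_funpow[of R f] by (auto simp: cycle_of_def)

text \<open>On a finite invariant set, reachability under two injections is symmetric:
  every step can be undone by going once more around a cycle.\<close>

lemma gen_reach_sym:
  assumes "inj a" "inj b" "finite S" "a ` S \<subseteq> S" "b ` S \<subseteq> S" "u \<in> S"
    "(gen_step a b)\<^sup>*\<^sup>* u v"
  shows "(gen_step a b)\<^sup>*\<^sup>* v u"
  using assms(7)
proof (induction rule: rtranclp_induct)
  case (step w v)
  have "w \<in> S" using gen_reach_closed[OF assms(4,5) step(1) assms(6)] .
  have "(gen_step a b)\<^sup>*\<^sup>* (a w) w"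
    using cycle_of_sym[OF assms(1,3,4) \<open>w \<in> S\<close> apply_in_cycle_of]
    by (rule rtranclp_if_in_cycle_of[rotated]) (simp add: gen_step_def)
  moreover have "(gen_step a b)\<^sup>*\<^sup>* (b w) w"
    using cycle_of_sym[OF assms(2,3,5) \<open>w \<in> S\<close> apply_in_cycle_of]
    by (rule rtranclp_if_in_cycle_of[rotated]) (simp add: gen_step_def)
  ultimately have "(gen_step a b)\<^sup>*\<^sup>* v w" using step(2) by (auto simp: gen_step_def)
  then show ?case using step(3) by simp
qed simp

lemma gen_reach_if_in_cycle_of_comp:
  assumes "y \<in> cycle_of (a \<circ> b) x"
  shows "(gen_step a b)\<^sup>*\<^sup>* x y"
proof -
  have "(gen_step a b)\<^sup>*\<^sup>* u ((a \<circ> b) u)" for u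
    by (rule rtranclp_trans[of _ _ "b u"]) (auto simp: gen_step_def)
  then have "((gen_step a b)\<^sup>*\<^sup>*)\<^sup>*\<^sup>* x y"
    using assms by (rule rtranclp_if_in_cycle_of)
  then show ?thesis by simp
qed

definition gen_component :: "('a \<Rightarrow> 'a) \<Rightarrow> ('a \<Rightarrow> 'a) \<Rightarrow> 'a set \<Rightarrow> 'a \<Rightarrow> 'a set" where
  "gen_component a b S p = {z\<in>S. (gen_step a b)\<^sup>*\<^sup>* p z}"

lemma gen_component_invariant:
  assumes "inj a" "inj b" "finite S" "a ` S \<subseteq> S" "b ` S \<subseteq> S" "p \<in> S"
  shows "a ` gen_component a b S p \<subseteq> gen_component a b S p"
    "b ` gen_component a b S p \<subseteq> gen_component a b S p"
    "gen_connected a b (gen_component a b S p)"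
proof -
  have "f ` gen_component a b S p \<subseteq> gen_component a b S p" if "f = a \<or> f = b" for f
  proof
    fix w assume "w \<in> f ` gen_component a b S p"
    then obtain z where z: "z \<in> S" "(gen_step a b)\<^sup>*\<^sup>* p z" "w = f z"
      by (auto simp: gen_component_def)
    have "gen_step a b z w" using that z(3) by (auto simp: gen_step_def)
    then have "(gen_step a b)\<^sup>*\<^sup>* p w" using z(2) by (meson rtranclp.rtrancl_into_rtrancl)
    moreover have "w \<in> S" using z assms(4,5) that by auto
    ultimately show "w \<in> gen_component a b S p" by (simp add: gen_component_def)
  qed
  then show "a ` gen_component a b S p \<subseteq> gen_component a b S p"
    "b ` gen_component a b S p \<subseteq> gen_component a b S p" by simp_all
  show "gen_connected a b (gen_component a b S p)"
    unfolding gen_connected_def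
  proof (intro ballI)
    fix u v assume "u \<in> gen_component a b S p" "v \<in> gen_component a b S p"
    then have "(gen_step a b)\<^sup>*\<^sup>* u p" "(gen_step a b)\<^sup>*\<^sup>* p v"
      using gen_reach_sym[OF assms(1-6)] by (auto simp: gen_component_def)
    then show "(gen_step a b)\<^sup>*\<^sup>* u v" by (rule rtranclp_trans)
  qed
qed

text \<open>Replacing \<open>b\<close> by \<open>b \<circ> transpose x y\<close> only reroutes the \<open>b\<close>-steps leaving
  \<open>x\<close> and \<open>y\<close>, so everything stays reachable from \<open>x\<close> or from \<open>y\<close>.\<close>

lemma gen_components_comp_transpose:
  assumes "inj a" "inj b" "finite S" "a ` S \<subseteq> S" "b ` S \<subseteq> S" "gen_connected a b S"
    "x \<in> S" "y \<in> S"
  defines "b' \<equiv> b \<circ> transpose x y"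
  shows "S = gen_component a b' S x \<union> gen_component a b' S y"
    and "(gen_step a b')\<^sup>*\<^sup>* x y \<Longrightarrow> gen_connected a b' S"
    and "\<not> (gen_step a b')\<^sup>*\<^sup>* x y \<Longrightarrow> gen_component a b' S x \<inter> gen_component a b' S y = {}"
proof -
  let ?R = "gen_step a b'"
  have b'_S: "b' ` S \<subseteq> S" unfolding b'_def using assms(7,8,5) by (rule comp_transpose_invariant)
  have reach_back: "?R\<^sup>*\<^sup>* v u" if "u \<in> S" "?R\<^sup>*\<^sup>* u v" for u v
    using gen_reach_sym[OF assms(1) inj_comp_transpose[OF assms(2)] assms(3,4) b'_S[unfolded b'_def]
        that[unfolded b'_def]] unfolding b'_def .
  have cover: "?R\<^sup>*\<^sup>* x z \<or> ?R\<^sup>*\<^sup>* y z" if "z \<in> S" for z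
  proof -
    have "(gen_step a b)\<^sup>*\<^sup>* x z" using assms(6,7) that by (auto simp: gen_connected_def)
    then show ?thesis
    proof (induction rule: rtranclp_induct)
      case (step w v)
      consider "?R w v" | "w = x" "v = b' y" | "w = y" "v = b' x"
        using step(2) by (cases "w = x \<or> w = y") (auto simp: gen_step_def b'_def)
      then show ?case
      proof cases
        case 1
        then show ?thesis using step(3) by (meson rtranclp.rtrancl_into_rtrancl)
      qed (auto simp: gen_step_def)
    qed simp
  qed
  then show "S = gen_component a b' S x \<union> gen_component a b' S y"
    by (auto simp: gen_component_def)
  show "gen_connected a b' S" if "?R\<^sup>*\<^sup>* x y"
    unfolding gen_connected_def
  proof (intro ballI)
    fix u v assume "u \<in> S" "v \<in> S"
    then have "?R\<^sup>*\<^sup>* u x" "?R\<^sup>*\<^sup>* x v"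
      using cover reach_back[OF assms(7)] that by (meson rtranclp_trans)+
    then show "?R\<^sup>*\<^sup>* u v" by (rule rtranclp_trans)
  qed
  show "gen_component a b' S x \<inter> gen_component a b' S y = {}" if "\<not> ?R\<^sup>*\<^sup>* x y"
  proof (rule ccontr)
    assume "gen_component a b' S x \<inter> gen_component a b' S y \<noteq> {}"
    then obtain z where z: "z \<in> S" "?R\<^sup>*\<^sup>* x z" "?R\<^sup>*\<^sup>* y z"
      by (auto simp: gen_component_def)
    have "?R\<^sup>*\<^sup>* x y" using z(2) reach_back[OF assms(8) z(3)] by (rule rtranclp_trans)
    with that show False ..
  qed
qed

definition cycle_sum :: "('a \<Rightarrow> 'a) \<Rightarrow> ('a \<Rightarrow> 'a) \<Rightarrow> 'a set \<Rightarrow> nat" where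
  "cycle_sum a b S = num_cycles a S + num_cycles b S + num_cycles (a \<circ> b) S"

lemma cycle_sum_bound_fixing:
  assumes "inj a" "finite S" "a ` S \<subseteq> S" "\<forall>z\<in>S. b z = z" "gen_connected a b S"
  shows "cycle_sum a b S \<le> card S + 2"
proof -
  have "cycle_of (a \<circ> b) z = cycle_of a z" if "z \<in> S" for z
    using assms(4) cycle_of_subset[OF assms(3) that] by (intro cycle_of_cong) auto
  then have "num_cycles (a \<circ> b) S = num_cycles a S"
    unfolding num_cycles_def by (metis image_cong)
  moreover have "num_cycles a S \<le> 1"
  proof (cases "S = {}")
    case False
    then obtain x0 where x0: "x0 \<in> S" by auto
    have "z \<in> cycle_of a x0" if "z \<in> S" for z
    proof -
      have "(gen_step a b)\<^sup>*\<^sup>* x0 z" using assms(5) x0 that by (auto simp: gen_connected_def)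
      then show ?thesis
      proof (induction rule: rtranclp_induct)
        case (step w v)
        have "w \<in> S" using gen_reach_closed[OF assms(3) _ step(1) x0] assms(4) by auto
        then have "v = a w \<or> v = w" using step(2) assms(4) by (auto simp: gen_step_def)
        then show ?case using step(3) apply_in_cycle_of cycle_of_trans by metis
      qed (rule self_in_cycle_of)
    qed
    then have "cycle_of a ` S \<subseteq> {cycle_of a x0}"
      using cycle_of_eq[OF assms(1-3) x0] by blast
    then show ?thesis unfolding num_cycles_def using card_mono[of "{cycle_of a x0}"] by fastforce
  qed (simp add: num_cycles_def)
  ultimately show ?thesis
    using num_cycles_fixing[OF assms(2,4)] by (simp add: cycle_sum_def)
qed

lemma cycle_sum_comp_transpose_connected:
  assumes "inj a" "inj b" "finite S" "a ` S \<subseteq> S" "b ` S \<subseteq> S" "x \<in> S" "b x \<noteq> x"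
    "cycle_sum a (b \<circ> transpose x (b x)) S \<le> card S + 2"
  shows "cycle_sum a b S \<le> card S + 2"
proof -
  define b' where "b' = b \<circ> transpose x (b x)"
  have bx: "b x \<in> S" "b x \<in> cycle_of b x" using assms(5,6) apply_in_cycle_of by auto
  have "num_cycles b' S = Suc (num_cycles b S)"
    unfolding b'_def using num_cycles_comp_transpose_same_cycle[OF assms(2,3,5,6)] assms(7) bx by simp
  moreover have "a \<circ> b = (a \<circ> b') \<circ> transpose x (b x)" by (simp add: b'_def comp_assoc)
  then have "num_cycles (a \<circ> b) S \<le> Suc (num_cycles (a \<circ> b') S)"
    using num_cycles_comp_transpose_le[OF inj_compose[OF assms(1) inj_comp_transpose[OF assms(2)]]
        assms(3) _ assms(6) bx(1)] assms(4,5,6,7) bx(1) comp_transpose_invariant[OF assms(6) bx(1) assms(5)]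
    unfolding b'_def by (auto simp: image_subset_iff)
  ultimately show ?thesis using assms(8) by (simp add: cycle_sum_def b'_def)
qed

lemma cycle_sum_comp_transpose_disconnected:
  assumes "inj a" "inj b" "finite S" "a ` S \<subseteq> S" "b ` S \<subseteq> S" "x \<in> S" "b x \<noteq> x"
  defines "b' \<equiv> b \<circ> transpose x (b x)"
  assumes "\<not> (gen_step a b')\<^sup>*\<^sup>* x (b x)"
    and "S = C1 \<union> C2" "C1 \<inter> C2 = {}"
    and "a ` C1 \<subseteq> C1" "b' ` C1 \<subseteq> C1" "a ` C2 \<subseteq> C2" "b' ` C2 \<subseteq> C2"
    and "cycle_sum a b' C1 \<le> card C1 + 2" "cycle_sum a b' C2 \<le> card C2 + 2"
  shows "cycle_sum a b S \<le> card S + 2"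
proof -
  have bx: "b x \<in> S" "b x \<in> cycle_of b x" using assms(5,6) apply_in_cycle_of by auto
  have fin: "finite C1" "finite C2" using assms(3,10) by auto
  have count: "num_cycles f S = num_cycles f C1 + num_cycles f C2"
    if "f ` C1 \<subseteq> C1" "f ` C2 \<subseteq> C2" for f
    using num_cycles_Un[OF fin assms(11) that] assms(10) by simp
  have inj_ab': "inj (a \<circ> b')" unfolding b'_def using assms(1,2) by (simp add: inj_compose inj_comp_transpose)
  have ab'_S: "(a \<circ> b') ` S \<subseteq> S"
    using assms(4) comp_transpose_invariant[OF assms(6) bx(1) assms(5)] by (auto simp: b'_def)
  have "b x \<notin> cycle_of (a \<circ> b') x"
    using assms(9) gen_reach_if_in_cycle_of_comp by metis
  moreover have "a \<circ> b = (a \<circ> b') \<circ> transpose x (b x)" by (simp add: b'_def comp_assoc)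
  ultimately have "num_cycles (a \<circ> b') S = Suc (num_cycles (a \<circ> b) S)"
    using num_cycles_comp_transpose_other_cycle[OF inj_ab' assms(3) ab'_S assms(6) bx(1)] assms(7)
    by simp
  moreover have "num_cycles b' S = Suc (num_cycles b S)"
    unfolding b'_def using num_cycles_comp_transpose_same_cycle[OF assms(2,3,5,6)] assms(7) bx by simp
  moreover have "(a \<circ> b') ` C1 \<subseteq> C1" "(a \<circ> b') ` C2 \<subseteq> C2"
    using assms(12-15) by (auto simp: image_subset_iff)
  then have "num_cycles (a \<circ> b') S = num_cycles (a \<circ> b') C1 + num_cycles (a \<circ> b') C2"
    by (rule count)
  moreover have "card S = card C1 + card C2"
    using card_Un_disjoint[OF fin assms(11)] assms(10) by simp
  ultimately show ?thesis
    using assms(16,17) count[OF assms(12,14)] count[OF assms(13,15)]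
    unfolding cycle_sum_def by linarith
qed

text \<open>The genus of a connected hypermap is nonnegative. The induction is on
  \<open>|S|\<close> minus the number of cycles of \<open>b\<close>: composing \<open>b\<close> with the transposition
  \<open>(x, b x)\<close> splits a cycle of \<open>b\<close> and changes the number of cycles of \<open>a \<circ> b\<close>
  by one; if it disconnects the hypermap, the two components are treated
  separately.\<close>

theorem cycle_sum_euler_bound:
  assumes "finite S" "inj a" "inj b" "a ` S \<subseteq> S" "b ` S \<subseteq> S" "gen_connected a b S"
  shows "cycle_sum a b S \<le> card S + 2"
  using assms
proof (induction "card S - num_cycles b S" arbitrary: S b rule: less_induct)
  case less
  note fin = less.prems(1) and inj_a = less.prems(2) and inj_b = less.prems(3)
    and a_S = less.prems(4) and b_S = less.prems(5) and conn = less.prems(6)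
  show ?case
  proof (cases "\<forall>z\<in>S. b z = z")
    case True
    then show ?thesis by (rule cycle_sum_bound_fixing[OF inj_a fin a_S _ conn])
  next
    case False
    then obtain x where x: "x \<in> S" "b x \<noteq> x" by auto
    define b' where "b' = b \<circ> transpose x (b x)"
    have bx: "b x \<in> S" "b x \<in> cycle_of b x" using b_S x(1) apply_in_cycle_of by auto
    have inj_b': "inj b'" unfolding b'_def using inj_b by (rule inj_comp_transpose)
    have b'_S: "b' ` S \<subseteq> S" unfolding b'_def using x(1) bx(1) b_S by (rule comp_transpose_invariant)
    have nb': "num_cycles b' S = Suc (num_cycles b S)"
      unfolding b'_def using num_cycles_comp_transpose_same_cycle[OF inj_b fin b_S x(1)] x(2) bx by simp
    have IH: "cycle_sum a b' T \<le> card T + 2"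
      if "T \<subseteq> S" "a ` T \<subseteq> T" "b' ` T \<subseteq> T" "gen_connected a b' T"
        "card T + num_cycles b' S \<le> card S + num_cycles b' T" for T
    proof (rule less.hyps)
      show "card T - num_cycles b' T < card S - num_cycles b S"
        using that(5) nb' num_cycles_le_card[OF fin, of b'] by linarith
    qed (use that fin inj_a inj_b' finite_subset in auto)
    note comps = gen_components_comp_transpose[OF inj_a inj_b fin a_S b_S conn x(1) bx(1),
        folded b'_def]
    show ?thesis
    proof (cases "(gen_step a b')\<^sup>*\<^sup>* x (b x)")
      case True
      then have "cycle_sum a b' S \<le> card S + 2"
        using IH[of S] comps(2) a_S b'_S by simp
      then show ?thesis
        unfolding b'_def by (rule cycle_sum_comp_transpose_connected[OF inj_a inj_b fin a_S b_S x])
    next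
      case False
      define C1 where "C1 = gen_component a b' S x"
      define C2 where "C2 = gen_component a b' S (b x)"
      note inv1 = gen_component_invariant[OF inj_a inj_b' fin a_S b'_S x(1), folded C1_def]
      note inv2 = gen_component_invariant[OF inj_a inj_b' fin a_S b'_S bx(1), folded C2_def]
      have S: "S = C1 \<union> C2" and disj: "C1 \<inter> C2 = {}"
        using comps(1) comps(3)[OF False] by (simp_all add: C1_def C2_def)
      have "num_cycles b' S = num_cycles b' C1 + num_cycles b' C2"
        using num_cycles_Un[of C1 C2] inv1(2) inv2(2) S disj fin by (metis finite_Un)
      moreover have "card S = card C1 + card C2" "num_cycles b' C1 \<le> card C1" "num_cycles b' C2 \<le> card C2"
        using S disj fin num_cycles_le_card[of C1] num_cycles_le_card[of C2]
        by (simp_all add: card_Un_disjoint)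
      ultimately have "cycle_sum a b' C1 \<le> card C1 + 2" "cycle_sum a b' C2 \<le> card C2 + 2"
        using IH[of C1] IH[of C2] inv1 inv2 S by auto
      then show ?thesis
        using cycle_sum_comp_transpose_disconnected[OF inj_a inj_b fin a_S b_S x, folded b'_def,
            OF False S disj inv1(1,2) inv2(1,2)] by blast
    qed
  qed
qed

section \<open>Darts of a cubic rotation graph\<close>

lemma card_3_distinct: "card {a, b, c} = 3 \<Longrightarrow> a \<noteq> b \<and> a \<noteq> c \<and> b \<noteq> c"
  by (cases "a = b"; cases "a = c"; cases "b = c"; simp add: card_insert_if)

locale cubic_rotation_graph =
  fixes V :: "'v set" and E :: "'v \<Rightarrow> 'v \<Rightarrow> bool" and rho :: "'v \<Rightarrow> 'v \<Rightarrow> 'v"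
  assumes simple_cubic: "simple_cubic_rotation_graph V E rho"
begin

lemma finite_V: "finite V"
  and edge_in_V: "E u v \<Longrightarrow> u \<in> V \<and> v \<in> V"
  and edge_sym: "E u v \<Longrightarrow> E v u"
  and no_loop: "\<not> E v v"
  and card_nbrs: "u \<in> V \<Longrightarrow> card (nbrs E u) = 3"
  and nbrs_rotation: "u \<in> V \<Longrightarrow> w \<in> nbrs E u \<Longrightarrow> nbrs E u = {w, rho u w, rho u (rho u w)}"
  using simple_cubic unfolding simple_cubic_rotation_graph_def by blast+

lemma rotation:
  assumes "E u w"
  shows "E u (rho u w)" "rho u w \<noteq> w" "rho u (rho u w) \<noteq> w" "rho u (rho u w) \<noteq> rho u w"
    "rho u (rho u (rho u w)) = w"
    "E u z \<Longrightarrow> z = w \<or> z = rho u w \<or> z = rho u (rho u w)"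
proof -
  have uV: "u \<in> V" using edge_in_V assms by blast
  have N: "nbrs E u = {w, rho u w, rho u (rho u w)}"
    using nbrs_rotation[OF uV] assms by (simp add: nbrs_def)
  then have "w \<noteq> rho u w \<and> w \<noteq> rho u (rho u w) \<and> rho u w \<noteq> rho u (rho u w)"
    using card_3_distinct card_nbrs[OF uV] by metis
  then show "rho u w \<noteq> w" "rho u (rho u w) \<noteq> w" "rho u (rho u w) \<noteq> rho u w" by auto
  have rN: "rho u w \<in> nbrs E u" using N by auto
  then show "E u (rho u w)" by (simp add: nbrs_def)
  have N2: "nbrs E u = {rho u w, rho u (rho u w), rho u (rho u (rho u w))}"
    using nbrs_rotation[OF uV rN] .
  have "rho u w \<noteq> rho u (rho u (rho u w)) \<and> rho u (rho u w) \<noteq> rho u (rho u (rho u w))"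
    using card_3_distinct card_nbrs[OF uV] N2 by metis
  moreover have "rho u (rho u (rho u w)) \<in> nbrs E u" using N2 by auto
  ultimately show "rho u (rho u (rho u w)) = w" using N by auto
  show "E u z \<Longrightarrow> z = w \<or> z = rho u w \<or> z = rho u (rho u w)"
    using N by (auto simp: nbrs_def)
qed

lemma has_neighbour:
  assumes "u \<in> V" shows "\<exists>w. E u w"
proof -
  have "nbrs E u \<noteq> {}" using card_nbrs[OF assms] by auto
  then show ?thesis by (auto simp: nbrs_def)
qed

abbreviation "D \<equiv> darts E"

lemma in_darts_iff: "(u, w) \<in> D \<longleftrightarrow> E u w"
  by (simp add: darts_def)

lemma finite_darts: "finite D"
proof -
  have "D \<subseteq> V \<times> V" using edge_in_V by (auto simp: darts_def)
  then show ?thesis using finite_V finite_subset by blast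
qed

lemma card_darts: "card D = 3 * card V"
proof -
  have "D = Sigma V (nbrs E)" using edge_in_V by (auto simp: darts_def nbrs_def)
  moreover have "finite (nbrs E u)" if "u \<in> V" for u
    using card_nbrs[OF that] card.infinite by fastforce
  ultimately have "card D = (\<Sum>u\<in>V. card (nbrs E u))"
    using finite_V by simp
  then show ?thesis using card_nbrs by simp
qed

text \<open>The rotation is extended by the identity off the darts, so that it is injective
  on the whole type.\<close>

definition dart_rot :: "'v \<times> 'v \<Rightarrow> 'v \<times> 'v" where
  "dart_rot d = (if d \<in> D then (fst d, rho (fst d) (snd d)) else d)"

definition dart_rev :: "'v \<times> 'v \<Rightarrow> 'v \<times> 'v" where
  "dart_rev d = (snd d, fst d)"

lemma dart_rot_edge: "E u w \<Longrightarrow> dart_rot (u, w) = (u, rho u w)"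
  by (simp add: dart_rot_def in_darts_iff)

lemma dart_rot_darts: "dart_rot ` D \<subseteq> D"
  using rotation(1) by (auto simp: dart_rot_def darts_def)

lemma dart_rev_darts: "dart_rev ` D \<subseteq> D"
  using edge_sym by (auto simp: dart_rev_def darts_def)

lemma dart_rot_3: "dart_rot (dart_rot (dart_rot d)) = d"
proof (cases d)
  case (Pair u w)
  show ?thesis
  proof (cases "E u w")
    case True
    then show ?thesis
      using rotation[OF True] rotation(1)[OF rotation(1)[OF True]] Pair by (simp add: dart_rot_edge)
  qed (simp add: Pair dart_rot_def in_darts_iff)
qed

lemma dart_rev_2: "dart_rev (dart_rev d) = d"
  by (simp add: dart_rev_def)

lemma inj_dart_rot: "inj dart_rot"
  by (metis injI dart_rot_3)

lemma inj_dart_rev: "inj dart_rev"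
  by (metis injI dart_rev_2)

lemma dart_rot_ne:
  assumes "d \<in> D"
  shows "dart_rot d \<noteq> d" "dart_rot (dart_rot d) \<noteq> d"
  using assms rotation(2,3) rotation(1)[of "fst d" "snd d"]
  by (cases d; simp add: in_darts_iff dart_rot_edge)+

lemma dart_rev_ne: "d \<in> D \<Longrightarrow> dart_rev d \<noteq> d"
  using no_loop by (cases d) (auto simp: dart_rev_def in_darts_iff)

definition face_perm :: "'v \<times> 'v \<Rightarrow> 'v \<times> 'v" where
  "face_perm = dart_rot \<circ> dart_rev"

lemma inj_face_perm: "inj face_perm"
  unfolding face_perm_def using inj_dart_rot inj_dart_rev by (rule inj_compose)

lemma face_perm_darts: "face_perm ` D \<subseteq> D"
  using dart_rot_darts dart_rev_darts by (auto simp: face_perm_def image_subset_iff)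

lemma face_step_eq: "d \<in> D \<Longrightarrow> face_step rho d = face_perm d"
  using dart_rev_darts by (cases d) (auto simp: face_step_def face_perm_def dart_rev_def dart_rot_def)

lemma faces_eq_cycles: "faces E rho = cycle_of face_perm ` D"
proof -
  have "(face_step rho ^^ n) d = (face_perm ^^ n) d" if "d \<in> D" for d n
  proof (induction n)
    case (Suc n)
    have "(face_perm ^^ n) d \<in> D"
      using funpow_in_invariant[OF face_perm_darts that] .
    then show ?case using Suc face_step_eq by simp
  qed simp
  then have "face_of rho d = cycle_of face_perm d" if "d \<in> D" for d
    using that unfolding face_of_def cycle_of_def by auto
  then show ?thesis unfolding faces_def by (auto simp: image_def)
qed

end

locale plane_cubic_graph_div3 = cubic_rotation_graph V E rho
  for V :: "'v set" and E :: "'v \<Rightarrow> 'v \<Rightarrow> bool" and rho :: "'v \<Rightarrow> 'v \<Rightarrow> 'v" +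
  assumes connected: "connected_graph V E"
    and plane: "plane_rotation V E rho"
    and faces_div3: "\<forall>f\<in>faces E rho. 3 dvd face_length f"
begin

text \<open>Euler's formula \<open>V - E + F = 2\<close> with \<open>V = |D|/3\<close> and \<open>E = |D|/2\<close>.\<close>

lemma euler_darts: "6 * num_cycles face_perm D = card D + 12"
proof -
  have rev_cycle: "cycle_of dart_rev d = {d, dart_rev d}" for d
    using dart_rev_2 by (intro cycle_of_period2) (simp add: numeral_2_eq_2)
  have "real (num_cycles dart_rev D) = real (card D) / real 2"
  proof (rule num_cycles_uniform[OF inj_dart_rev finite_darts dart_rev_darts])
    fix d assume "d \<in> D"
    then show "card (cycle_of dart_rev d) = 2"
      using dart_rev_ne rev_cycle by (metis card_2_iff)
  qed
  then have rev_count: "card D = 2 * num_cycles dart_rev D" by linarith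
  then have "card D div 2 = num_cycles dart_rev D" by simp
  moreover have "card (faces E rho) = num_cycles face_perm D"
    by (simp add: faces_eq_cycles num_cycles_def)
  ultimately have "int (card V) - int (num_cycles dart_rev D) + int (num_cycles face_perm D) = 2"
    using plane by (simp add: plane_rotation_def)
  then show ?thesis
    using card_darts rev_count by linarith
qed

lemma darts_gen_connected: "gen_connected dart_rot dart_rev D"
proof -
  let ?R = "gen_step dart_rot dart_rev"
  have around: "?R\<^sup>*\<^sup>* (u, w) (u, z)" if "E u w" "E u z" for u w z
  proof -
    have "?R (u, w) (u, rho u w)" "?R (u, rho u w) (u, rho u (rho u w))"
      using that(1) rotation(1)[OF that(1)] by (simp_all add: gen_step_def dart_rot_edge)
    then show ?thesis using rotation(6)[OF that] by auto
  qed
  have reach: "?R\<^sup>*\<^sup>* (u0, w0) (v, w)" if "E u0 w0" "E v w" for u0 w0 v w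
  proof -
    have "E\<^sup>*\<^sup>* u0 v"
      using connected edge_in_V that unfolding connected_graph_def by blast
    then show ?thesis
      using that(2)
    proof (induction arbitrary: w rule: rtranclp_induct)
      case base
      then show ?case using around[OF that(1)] by simp
    next
      case (step v v' w)
      have "?R\<^sup>*\<^sup>* (u0, w0) (v, v')" using step.IH step.hyps(2) by blast
      moreover have "?R (v, v') (v', v)" by (simp add: gen_step_def dart_rev_def)
      moreover have "?R\<^sup>*\<^sup>* (v', v) (v', w)" using around[OF edge_sym[OF step.hyps(2)] step.prems] .
      ultimately show ?case by (meson rtranclp.rtrancl_into_rtrancl rtranclp_trans)
    qed
  qed
  show ?thesis
    unfolding gen_connected_def by (auto simp: darts_def intro: reach)
qed

end

section \<open>A covering of the darts by colour--potential states\<close>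

datatype z3 = Z0 | Z1 | Z2

lemma UNIV_z3: "(UNIV :: z3 set) = {Z0, Z1, Z2}"
  using z3.exhaust by auto

instance z3 :: finite
  by standard (simp add: UNIV_z3)

fun z3_succ :: "z3 \<Rightarrow> z3" where
  "z3_succ Z0 = Z1" | "z3_succ Z1 = Z2" | "z3_succ Z2 = Z0"

text \<open>The Klein four-group is \<open>bool \<times> bool\<close> under componentwise exclusive or;
  \<open>klein\<close> is a bijection from \<open>z3\<close> onto its three non-zero elements.\<close>

definition kadd :: "bool \<times> bool \<Rightarrow> bool \<times> bool \<Rightarrow> bool \<times> bool" where
  "kadd p q = (fst p \<noteq> fst q, snd p \<noteq> snd q)"

fun klein :: "z3 \<Rightarrow> bool \<times> bool" where
  "klein Z0 = (True, False)" | "klein Z1 = (False, True)" | "klein Z2 = (True, True)"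

lemma z3_succ_3: "z3_succ (z3_succ (z3_succ c)) = c"
  by (cases c) simp_all

lemma z3_succ_ne: "z3_succ c \<noteq> c" "z3_succ (z3_succ c) \<noteq> c"
  by (cases c; simp)+

lemma klein_ne_zero: "klein c \<noteq> (False, False)"
  by (cases c) auto

lemma kadd_zero_left: "kadd (False, False) q = q"
  by (simp add: kadd_def)

lemma kadd_self: "kadd p p = (False, False)"
  by (simp add: kadd_def)

lemma kadd_eq_zero_iff: "kadd p q = (False, False) \<longleftrightarrow> p = q"
  by (cases p; cases q) (auto simp: kadd_def)

lemma klein_exactly_one:
  assumes "p \<noteq> (False, False)"
  shows "(klein c = p \<and> klein (z3_succ c) \<noteq> p \<and> klein (z3_succ (z3_succ c)) \<noteq> p) \<or>
    (klein c \<noteq> p \<and> klein (z3_succ c) = p \<and> klein (z3_succ (z3_succ c)) \<noteq> p) \<or>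
    (klein c \<noteq> p \<and> klein (z3_succ c) \<noteq> p \<and> klein (z3_succ (z3_succ c)) = p)"
  using assms by (cases c; cases p) auto

lemma kadd_klein_succ: "kadd (klein c) (klein (z3_succ c)) = klein c' \<Longrightarrow> c' = z3_succ (z3_succ c)"
  by (cases c; cases c') (auto simp: kadd_def)

lemma kadd_klein_succ_succ: "kadd (klein c) (klein (z3_succ (z3_succ c))) = klein c' \<Longrightarrow> c' = z3_succ c"
  by (cases c; cases c') (auto simp: kadd_def)

type_synonym state = "z3 \<times> bool \<times> bool"

definition rot_voltage :: "state \<Rightarrow> state" where
  "rot_voltage s = (z3_succ (fst s), snd s)"

definition rev_voltage :: "state \<Rightarrow> state" where
  "rev_voltage s = (fst s, kadd (snd s) (klein (fst s)))"

lemma rot_voltage_3: "rot_voltage (rot_voltage (rot_voltage s)) = s"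
  by (simp add: rot_voltage_def z3_succ_3)

lemma rev_voltage_2: "rev_voltage (rev_voltage s) = s"
  by (cases s) (auto simp: rev_voltage_def kadd_def)

lemma inj_rot_voltage: "inj rot_voltage"
  by (metis injI rot_voltage_3)

lemma inj_rev_voltage: "inj rev_voltage"
  by (metis injI rev_voltage_2)

text \<open>Three face steps advance the colour through all of \<open>z3\<close> and add
  \<open>klein Z0 + klein Z1 + klein Z2 = 0\<close> to the potential: this is where faces of
  length divisible by 3 are needed.\<close>

lemma face_voltage_cube: "((rot_voltage \<circ> rev_voltage) ^^ (3 * q)) s = s"
proof -
  have "(rot_voltage \<circ> rev_voltage) ((rot_voltage \<circ> rev_voltage) ((rot_voltage \<circ> rev_voltage) s)) = s"
    for s
    by (cases s; cases "fst s"; cases "fst (snd s)"; cases "snd (snd s)")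
      (auto simp: rot_voltage_def rev_voltage_def kadd_def)
  then have "(rot_voltage \<circ> rev_voltage) ^^ 3 = id"
    by (auto simp: fun_eq_iff numeral_3_eq_3)
  moreover have "(rot_voltage \<circ> rev_voltage) ^^ (3 * q) = ((rot_voltage \<circ> rev_voltage) ^^ 3) ^^ q"
    by (simp add: funpow_mult)
  moreover have "id ^^ q = id" by (induction q) auto
  ultimately show ?thesis by simp
qed

lemma funpow_map_prod:
  fixes f :: "'a \<Rightarrow> 'a" and g :: "'b \<Rightarrow> 'b"
  shows "(map_prod f g ^^ n) (x, s) = ((f ^^ n) x, (g ^^ n) s)"
  by (induction n) simp_all

lemma card_fibre_le:
  fixes g :: "'b::finite \<Rightarrow> 'b"
  assumes "inj g" "map_prod f g ` C \<subseteq> C"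
  shows "card {s. (x, s) \<in> C} \<le> card {s. (f x, s) \<in> C}"
proof -
  have "g ` {s. (x, s) \<in> C} \<subseteq> {s. (f x, s) \<in> C}"
    using assms(2) by auto
  then have "card (g ` {s. (x, s) \<in> C}) \<le> card {s. (f x, s) \<in> C}"
    by (intro card_mono) simp_all
  then show ?thesis
    using card_image[OF inj_on_subset[OF assms(1) subset_UNIV]] by simp
qed

lemma card_cycle_of_map_prod:
  fixes g :: "'b::finite \<Rightarrow> 'b"
  assumes "inj f" "finite S" "f ` S \<subseteq> S" "x \<in> S" "inj g"
    and "(g ^^ card (cycle_of f x)) s = s"
  shows "card (cycle_of (map_prod f g) (x, s)) = card (cycle_of f x)"
proof -
  let ?h = "map_prod f g" and ?S = "S \<times> (UNIV :: 'b set)"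
  have inj_h: "inj ?h" using map_prod_inj_on[OF assms(1,5)] by simp
  have fin: "finite ?S" using assms(2) by simp
  have h_S: "?h ` ?S \<subseteq> ?S" using assms(3) by auto
  have xs: "(x, s) \<in> ?S" using assms(4) by simp
  define L where "L = card (cycle_of f x)"
  have L: "L = period f x" using card_cycle_of[OF assms(1-4)] by (simp add: L_def)
  have "(?h ^^ L) (x, s) = (x, s)"
    using period(2)[OF assms(1-4)] assms(6) card_cycle_of[OF assms(1-4)]
    by (simp add: funpow_map_prod L_def)
  then have "period ?h (x, s) dvd L"
    by (rule period_dvd[OF inj_h fin h_S xs])
  moreover have "(f ^^ period ?h (x, s)) x = x"
    using period(2)[OF inj_h fin h_S xs] by (simp add: funpow_map_prod)
  then have "L dvd period ?h (x, s)"
    unfolding L by (rule period_dvd[OF assms(1-4)])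
  ultimately have "period ?h (x, s) = L" by (rule dvd_antisym)
  then show ?thesis
    using card_cycle_of[OF inj_h fin h_S xs] L_def by simp
qed

lemma sum_over_fibres:
  fixes h :: "'a \<Rightarrow> real"
  assumes "finite D" "C \<subseteq> D \<times> (UNIV :: 'b::finite set)" "\<And>x. x \<in> D \<Longrightarrow> card {s. (x, s) \<in> C} = k"
  shows "(\<Sum>z\<in>C. h (fst z)) = real k * (\<Sum>x\<in>D. h x)"
proof -
  have "C = Sigma D (\<lambda>x. {s. (x, s) \<in> C})" using assms(2) by auto
  then have "(\<Sum>z\<in>C. h (fst z)) = (\<Sum>(x, s)\<in>Sigma D (\<lambda>x. {s. (x, s) \<in> C}). h x)"
    by (simp add: case_prod_beta)
  also have "\<dots> = (\<Sum>x\<in>D. \<Sum>s\<in>{s. (x, s) \<in> C}. h x)"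
    by (rule sum.Sigma[symmetric]) (simp_all add: assms(1))
  also have "\<dots> = (\<Sum>x\<in>D. real k * h x)" using assms(3) by simp
  finally show ?thesis by (simp add: sum_distrib_left)
qed

context plane_cubic_graph_div3
begin

definition lift_rot :: "('v \<times> 'v) \<times> state \<Rightarrow> ('v \<times> 'v) \<times> state" where
  "lift_rot = map_prod dart_rot rot_voltage"

definition lift_rev :: "('v \<times> 'v) \<times> state \<Rightarrow> ('v \<times> 'v) \<times> state" where
  "lift_rev = map_prod dart_rev rev_voltage"

definition base_dart :: "'v \<times> 'v" where
  "base_dart = (SOME d. d \<in> D)"

definition cover :: "(('v \<times> 'v) \<times> state) set" where
  "cover = gen_component lift_rot lift_rev (D \<times> UNIV) (base_dart, Z0, False, False)"

definition sheets :: nat where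
  "sheets = card {s. (base_dart, s) \<in> cover}"

lemma base_dart: "base_dart \<in> D"
proof -
  obtain u where "u \<in> V" using connected unfolding connected_graph_def by blast
  then obtain w where "E u w" using has_neighbour by blast
  then show ?thesis unfolding base_dart_def by (metis in_darts_iff someI)
qed

lemma inj_lift_rot: "inj lift_rot"
  using map_prod_inj_on[OF inj_dart_rot inj_rot_voltage] by (simp add: lift_rot_def)

lemma inj_lift_rev: "inj lift_rev"
  using map_prod_inj_on[OF inj_dart_rev inj_rev_voltage] by (simp add: lift_rev_def)

lemma lift_rot_darts: "lift_rot ` (D \<times> UNIV) \<subseteq> D \<times> UNIV"
  using dart_rot_darts by (auto simp: lift_rot_def)

lemma lift_rev_darts: "lift_rev ` (D \<times> UNIV) \<subseteq> D \<times> UNIV"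
  using dart_rev_darts by (auto simp: lift_rev_def)

lemma cover:
  "cover \<subseteq> D \<times> UNIV" "finite cover" "lift_rot ` cover \<subseteq> cover" "lift_rev ` cover \<subseteq> cover"
  "gen_connected lift_rot lift_rev cover"
proof -
  have fin: "finite (D \<times> (UNIV :: state set))" using finite_darts by simp
  have "(base_dart, Z0, False, False) \<in> D \<times> UNIV" using base_dart by simp
  note comp = gen_component_invariant[OF inj_lift_rot inj_lift_rev fin lift_rot_darts lift_rev_darts
      this, folded cover_def]
  show "cover \<subseteq> D \<times> UNIV" by (auto simp: cover_def gen_component_def)
  then show "finite cover" using fin finite_subset by blast
  show "lift_rot ` cover \<subseteq> cover" "lift_rev ` cover \<subseteq> cover"
    "gen_connected lift_rot lift_rev cover" using comp by simp_all
qed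

lemma card_fibre_step:
  assumes "gen_step dart_rot dart_rev d d'"
  shows "card {s. (d, s) \<in> cover} \<le> card {s. (d', s) \<in> cover}"
proof -
  have "card {s. (d, s) \<in> cover} \<le> card {s. (dart_rot d, s) \<in> cover}"
    using cover(3) unfolding lift_rot_def by (rule card_fibre_le[OF inj_rot_voltage])
  moreover have "card {s. (d, s) \<in> cover} \<le> card {s. (dart_rev d, s) \<in> cover}"
    using cover(4) unfolding lift_rev_def by (rule card_fibre_le[OF inj_rev_voltage])
  ultimately show ?thesis using assms by (auto simp: gen_step_def)
qed

lemma card_fibre: "d \<in> D \<Longrightarrow> card {s. (d, s) \<in> cover} = sheets"
proof -
  have mono: "card {s. (d, s) \<in> cover} \<le> card {s. (d', s) \<in> cover}"
    if "(gen_step dart_rot dart_rev)\<^sup>*\<^sup>* d d'" for d d'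
    using that by (induction rule: rtranclp_induct) (auto dest: card_fibre_step)
  assume "d \<in> D"
  then show ?thesis
    using darts_gen_connected base_dart mono[of d base_dart] mono[of base_dart d]
    unfolding gen_connected_def sheets_def by simp
qed

lemma sheets_pos: "0 < sheets"
proof -
  have "(base_dart, Z0, False, False) \<in> cover" using base_dart by (simp add: cover_def gen_component_def)
  then show ?thesis
    unfolding sheets_def by (auto simp: card_gt_0_iff)
qed

lemma card_cover: "real (card cover) = real sheets * real (card D)"
  using sum_over_fibres[OF finite_darts cover(1) card_fibre, of "\<lambda>_. 1"] by simp

lemma card_cycle_of_lift_rot: "z \<in> cover \<Longrightarrow> card (cycle_of lift_rot z) = 3"
proof -
  assume "z \<in> cover"
  then obtain d s where z: "z = (d, s)" "d \<in> D" using cover(1) by auto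
  have "(lift_rot ^^ 3) z = z"
    using dart_rot_3 rot_voltage_3 by (simp add: z(1) numeral_3_eq_3 lift_rot_def)
  then have "cycle_of lift_rot z = {z, lift_rot z, lift_rot (lift_rot z)}"
    by (rule cycle_of_period3)
  moreover have "lift_rot z \<noteq> z" "lift_rot (lift_rot z) \<noteq> z" "lift_rot (lift_rot z) \<noteq> lift_rot z"
    using dart_rot_ne[OF z(2)] dart_rot_ne[OF dart_rot_darts[THEN subsetD, OF imageI, OF z(2)]] z(1)
    by (auto simp: lift_rot_def)
  ultimately show ?thesis by simp
qed

lemma card_cycle_of_lift_rev: "z \<in> cover \<Longrightarrow> card (cycle_of lift_rev z) = 2"
proof -
  assume "z \<in> cover"
  then obtain d s where z: "z = (d, s)" "d \<in> D" using cover(1) by auto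
  have "(lift_rev ^^ 2) z = z"
    using dart_rev_2 rev_voltage_2 by (simp add: z(1) numeral_2_eq_2 lift_rev_def)
  then have "cycle_of lift_rev z = {z, lift_rev z}"
    by (rule cycle_of_period2)
  moreover have "lift_rev z \<noteq> z" using dart_rev_ne[OF z(2)] z(1) by (auto simp: lift_rev_def)
  ultimately show ?thesis by simp
qed

lemma card_face_cycle_dvd: "d \<in> D \<Longrightarrow> 3 dvd card (cycle_of face_perm d)"
  using faces_div3 faces_eq_cycles by (auto simp: face_length_def)

lemma card_cycle_of_lift_face:
  assumes "z \<in> cover"
  shows "card (cycle_of (lift_rot \<circ> lift_rev) z) = card (cycle_of face_perm (fst z))"
proof -
  obtain d s where z: "z = (d, s)" "d \<in> D" using assms cover(1) by auto
  have lift_face: "lift_rot \<circ> lift_rev = map_prod face_perm (rot_voltage \<circ> rev_voltage)"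
    by (simp add: lift_rot_def lift_rev_def face_perm_def map_prod_compose)
  obtain q where "card (cycle_of face_perm d) = 3 * q"
    using card_face_cycle_dvd[OF z(2)] by blast
  then have "((rot_voltage \<circ> rev_voltage) ^^ card (cycle_of face_perm d)) s = s"
    by (simp add: face_voltage_cube)
  then show ?thesis
    unfolding lift_face z(1)
    using card_cycle_of_map_prod[OF inj_face_perm finite_darts face_perm_darts z(2)]
      inj_compose[OF inj_rot_voltage inj_rev_voltage] by simp
qed

text \<open>The Euler inequality for the covering component reads
  \<open>k|D|/3 + k|D|/2 + k(|D| + 12)/6 \<le> k|D| + 2\<close>, where \<open>k\<close> is the number of sheets.\<close>

lemma sheets_eq_1: "sheets = 1"
proof -
  have inj_lift_face: "inj (lift_rot \<circ> lift_rev)"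
    using inj_lift_rot inj_lift_rev by (rule inj_compose)
  have lift_face_cover: "(lift_rot \<circ> lift_rev) ` cover \<subseteq> cover"
    using cover(3,4) by (auto simp: image_subset_iff)
  have "real (num_cycles lift_rot cover) = real (card cover) / real 3"
    using num_cycles_uniform[OF inj_lift_rot cover(2,3) card_cycle_of_lift_rot] .
  moreover have "real (num_cycles lift_rev cover) = real (card cover) / real 2"
    using num_cycles_uniform[OF inj_lift_rev cover(2,4) card_cycle_of_lift_rev] .
  moreover have "real (num_cycles (lift_rot \<circ> lift_rev) cover)
      = real sheets * real (num_cycles face_perm D)"
  proof -
    have "real (num_cycles (lift_rot \<circ> lift_rev) cover)
        = (\<Sum>z\<in>cover. 1 / real (card (cycle_of face_perm (fst z))))"
      using num_cycles_eq_sum[OF inj_lift_face cover(2) lift_face_cover]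
        card_cycle_of_lift_face by simp
    also have "\<dots> = real sheets * (\<Sum>d\<in>D. 1 / real (card (cycle_of face_perm d)))"
      by (rule sum_over_fibres[OF finite_darts cover(1) card_fibre])
    finally show ?thesis
      using num_cycles_eq_sum[OF inj_face_perm finite_darts face_perm_darts] by simp
  qed
  moreover have "num_cycles lift_rot cover + num_cycles lift_rev cover
      + num_cycles (lift_rot \<circ> lift_rev) cover \<le> card cover + 2"
    using cycle_sum_euler_bound[OF cover(2) inj_lift_rot inj_lift_rev cover(3,4,5)]
    by (simp add: cycle_sum_def)
  ultimately have "real (card cover) / 3 + real (card cover) / 2
      + real sheets * real (num_cycles face_perm D) \<le> real (card cover) + 2"
    by linarith
  moreover have "6 * (real sheets * real (num_cycles face_perm D))
      = real sheets * real (card D) + 12 * real sheets"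
    using arg_cong[OF euler_darts, of real] by (simp add: algebra_simps)
  ultimately have "real sheets \<le> 1"
    unfolding card_cover by linarith
  then show ?thesis using sheets_pos by simp
qed

section \<open>The colouring\<close>

definition label :: "'v \<times> 'v \<Rightarrow> state" where
  "label d = (THE s. (d, s) \<in> cover)"

lemma in_cover_iff: "d \<in> D \<Longrightarrow> (d, s) \<in> cover \<longleftrightarrow> s = label d"
proof -
  assume "d \<in> D"
  then have "card {s. (d, s) \<in> cover} = 1" using card_fibre sheets_eq_1 by simp
  then obtain s0 where s0: "{s. (d, s) \<in> cover} = {s0}"
    by (auto simp: card_1_singleton_iff)
  then have "(d, s) \<in> cover \<longleftrightarrow> s = s0" for s by blast
  moreover have "label d = s0" unfolding label_def using s0 by auto
  ultimately show ?thesis by simp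
qed

lemma label_rot:
  assumes "d \<in> D"
  shows "label (dart_rot d) = rot_voltage (label d)"
proof -
  have "lift_rot (d, label d) \<in> cover" using cover(3) in_cover_iff[OF assms] by blast
  then show ?thesis
    using in_cover_iff[OF dart_rot_darts[THEN subsetD, OF imageI, OF assms]] by (simp add: lift_rot_def)
qed

lemma label_rev:
  assumes "d \<in> D"
  shows "label (dart_rev d) = rev_voltage (label d)"
proof -
  have "lift_rev (d, label d) \<in> cover" using cover(4) in_cover_iff[OF assms] by blast
  then show ?thesis
    using in_cover_iff[OF dart_rev_darts[THEN subsetD, OF imageI, OF assms]] by (simp add: lift_rev_def)
qed

definition colour :: "'v \<times> 'v \<Rightarrow> z3" where
  "colour d = fst (label d)"

definition potential :: "'v \<times> 'v \<Rightarrow> bool \<times> bool" where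
  "potential d = snd (label d)"

lemma colour_rot: "E u w \<Longrightarrow> colour (u, rho u w) = z3_succ (colour (u, w))"
  using label_rot[of "(u, w)"] by (simp add: in_darts_iff dart_rot_edge colour_def rot_voltage_def)

lemma potential_rot: "E u w \<Longrightarrow> potential (u, rho u w) = potential (u, w)"
  using label_rot[of "(u, w)"] by (simp add: in_darts_iff dart_rot_edge potential_def rot_voltage_def)

lemma colour_rev: "E u w \<Longrightarrow> colour (w, u) = colour (u, w)"
  using label_rev[of "(u, w)"] by (simp add: in_darts_iff dart_rev_def colour_def rev_voltage_def)

lemma potential_rev: "E u w \<Longrightarrow> potential (w, u) = kadd (potential (u, w)) (klein (colour (u, w)))"
  using label_rev[of "(u, w)"]
  by (simp add: in_darts_iff dart_rev_def colour_def potential_def rev_voltage_def)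

lemma neighbour_cases:
  assumes "E u w" "E u z"
  shows "(z = w \<and> colour (u, z) = colour (u, w)) \<or>
    (z = rho u w \<and> colour (u, z) = z3_succ (colour (u, w))) \<or>
    (z = rho u (rho u w) \<and> colour (u, z) = z3_succ (z3_succ (colour (u, w))))"
  using rotation(6)[OF assms] colour_rot[OF assms(1)] colour_rot[OF rotation(1)[OF assms(1)]]
  by auto

lemma potential_at_vertex:
  assumes "E u w" "E u z"
  shows "potential (u, z) = potential (u, w)"
proof -
  have "potential (u, rho u (rho u w)) = potential (u, rho u w)"
    using potential_rot[OF rotation(1)[OF assms(1)]] .
  then show ?thesis using rotation(6)[OF assms] potential_rot[OF assms(1)] by auto
qed

definition vertex_potential :: "'v \<Rightarrow> bool \<times> bool" where
  "vertex_potential u = potential (u, SOME w. E u w)"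

lemma potential_eq_vertex_potential: "E u w \<Longrightarrow> potential (u, w) = vertex_potential u"
  unfolding vertex_potential_def by (metis potential_at_vertex someI)

lemma vertex_potential_edge:
  "E u w \<Longrightarrow> vertex_potential w = kadd (vertex_potential u) (klein (colour (u, w)))"
  using potential_rev[of u w] potential_eq_vertex_potential[of u w]
    potential_eq_vertex_potential[OF edge_sym, of u w] by simp

definition black :: "'v set" where
  "black = {u \<in> V. vertex_potential u = (False, False)}"

lemma black_neighbour_white:
  assumes "x \<in> black" "E x y"
  shows "y \<in> V - black"
proof -
  have "vertex_potential y = klein (colour (x, y))"
    using vertex_potential_edge[OF assms(2)] assms(1) kadd_zero_left by (simp add: black_def)
  then show ?thesis using klein_ne_zero edge_in_V[OF assms(2)] by (simp add: black_def)
qed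

text \<open>The potentials of the three neighbours of \<open>x\<close> are \<open>p + klein c\<close> for the three
  colours \<open>c\<close>, and exactly one of them vanishes when \<open>p \<noteq> 0\<close>.\<close>

lemma white_one_black_neighbour:
  assumes "x \<in> V - black"
  shows "card {y. E x y \<and> y \<in> black} = 1"
proof -
  have xV: "x \<in> V" and nz: "vertex_potential x \<noteq> (False, False)"
    using assms by (auto simp: black_def)
  obtain w where w: "E x w" using has_neighbour[OF xV] by blast
  let ?c = "colour (x, w)" and ?p = "vertex_potential x"
  have black_iff: "y \<in> black \<longleftrightarrow> klein (colour (x, y)) = ?p" if "E x y" for y
    using vertex_potential_edge[OF that] edge_in_V[OF that] kadd_eq_zero_iff
    by (auto simp: black_def)
  have w1: "E x (rho x w)" and w2: "E x (rho x (rho x w))"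
    using rotation(1) w by blast+
  have c1: "colour (x, rho x w) = z3_succ ?c" using colour_rot[OF w] .
  have c2: "colour (x, rho x (rho x w)) = z3_succ (z3_succ ?c)" using colour_rot[OF w1] c1 by simp
  have nbrs: "E x y \<longleftrightarrow> y = w \<or> y = rho x w \<or> y = rho x (rho x w)" for y
    using rotation(6)[OF w] w w1 w2 by auto
  from klein_exactly_one[OF nz, of ?c]
  have "{y. E x y \<and> y \<in> black} = {w} \<or> {y. E x y \<and> y \<in> black} = {rho x w} \<or>
      {y. E x y \<and> y \<in> black} = {rho x (rho x w)}"
    using nbrs black_iff c1 c2 w w1 w2 by auto
  then show ?thesis by auto
qed

text \<open>Along a path \<open>x a b y\<close> between black vertices the colours \<open>i, k, j\<close> of its
  edges satisfy \<open>klein i + klein k = klein j\<close> and \<open>i \<noteq> k\<close>; hence \<open>k\<close> and \<open>j\<close>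
  are both the successor of the previous colour (two right turns), or both
  its predecessor (two left turns).\<close>

lemma black_path_turns:
  assumes "x \<in> black" "y \<in> black" "E x a" "E a b" "E b y"
  shows "(turns_left rho x a b \<and> turns_left rho a b y) \<or>
    (turns_right rho x a b \<and> turns_right rho a b y)"
proof -
  define i where "i = colour (x, a)"
  define k where "k = colour (a, b)"
  define j where "j = colour (b, y)"
  have pa: "vertex_potential a = klein i"
    using vertex_potential_edge[OF assms(3)] assms(1) kadd_zero_left by (simp add: black_def i_def)
  have pb: "vertex_potential b = kadd (klein i) (klein k)"
    using vertex_potential_edge[OF assms(4)] pa by (simp add: k_def)
  have "kadd (vertex_potential b) (klein j) = (False, False)"
    using vertex_potential_edge[OF assms(5)] assms(2) by (simp add: black_def j_def)
  then have ikj: "kadd (klein i) (klein k) = klein j"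
    using pb kadd_eq_zero_iff by simp
  have "i \<noteq> k"
    using ikj kadd_self klein_ne_zero by metis
  have Eax: "E a x" and Eba: "E b a" using edge_sym assms(3,4) by blast+
  have cax: "colour (a, x) = i" and cba: "colour (b, a) = k"
    using colour_rev assms(3,4) by (simp_all add: i_def k_def)
  from neighbour_cases[OF Eax assms(4)] show ?thesis
  proof (elim disjE conjE)
    assume "b = x" "colour (a, b) = colour (a, x)"
    then show ?thesis using \<open>i \<noteq> k\<close> cax k_def by simp
  next
    assume b: "b = rho a x" and "colour (a, b) = z3_succ (colour (a, x))"
    then have "k = z3_succ i" using cax k_def by simp
    then have "j = z3_succ k" using kadd_klein_succ[of i j] ikj z3_succ_3 by simp
    then have "y = rho b a"
      using neighbour_cases[OF Eba assms(5)] cba j_def z3_succ_ne by metis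
    then show ?thesis using b by (simp add: turns_right_def)
  next
    assume b: "b = rho a (rho a x)" and "colour (a, b) = z3_succ (z3_succ (colour (a, x)))"
    then have "k = z3_succ (z3_succ i)" using cax k_def by simp
    then have "j = z3_succ (z3_succ k)" using kadd_klein_succ_succ[of i j] ikj z3_succ_3 by simp
    then have "y = rho b (rho b a)"
      using neighbour_cases[OF Eba assms(5)] cba j_def z3_succ_ne by metis
    moreover have "rho a b = x" using b rotation(5)[OF Eax] by simp
    moreover have "rho b (rho b (rho b a)) = a" using rotation(5)[OF Eba] .
    ultimately show ?thesis by (simp add: turns_left_def)
  qed
qed

end

lemma path_of_graph_dist_3:
  assumes "E\<^sup>*\<^sup>* x y" "graph_dist E x y = 3"
  shows "\<exists>a b. E x a \<and> E a b \<and> E b y"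
proof -
  have "\<exists>n. (E ^^ n) x y" using assms(1) rtranclp_power by metis
  then have "(E ^^ (LEAST n. (E ^^ n) x y)) x y" by (rule LeastI_ex)
  then have "(E ^^ Suc (Suc (Suc 0))) x y"
    using assms(2) by (simp add: graph_dist_def numeral_3_eq_3)
  then obtain a where "E x a" "(E ^^ Suc (Suc 0)) a y" using relpowp_Suc_D2 by metis
  moreover from this(2) obtain b where "E a b" "(E ^^ Suc 0) b y" using relpowp_Suc_D2 by metis
  ultimately show ?thesis by auto
qed

theorem proposition2p10:
  fixes V :: "'v set" and E :: "'v \<Rightarrow> 'v \<Rightarrow> bool" and rho :: "'v \<Rightarrow> 'v \<Rightarrow> 'v"
  assumes "cubic_plane_graph V E rho"
    and "\<forall>f\<in>faces E rho. 3 dvd face_length f"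
  shows "\<exists>B \<subseteq> V.
           (\<forall>x\<in>B. \<forall>y. E x y \<longrightarrow> y \<in> V - B) \<and>
           (\<forall>x\<in>V - B. card {y. E x y \<and> y \<in> B} = 1) \<and>
           (\<forall>x\<in>B. \<forall>y\<in>B. graph_dist E x y = 3 \<longrightarrow>
              (\<exists>a b. E x a \<and> E a b \<and> E b y \<and>
                 ((turns_left rho x a b \<and> turns_left rho a b y) \<or>
                  (turns_right rho x a b \<and> turns_right rho a b y))))"
proof -
  interpret plane_cubic_graph_div3 V E rho
    using assms by unfold_locales (auto simp: cubic_plane_graph_def)
  show ?thesis
  proof (intro exI[of _ black] conjI ballI allI impI)
    show "black \<subseteq> V" by (auto simp: black_def)
  next
    fix x y assume "x \<in> black" "E x y"
    then show "y \<in> V - black" by (rule black_neighbour_white)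
  next
    fix x assume "x \<in> V - black"
    then show "card {y. E x y \<and> y \<in> black} = 1" by (rule white_one_black_neighbour)
  next
    fix x y assume xy: "x \<in> black" "y \<in> black" "graph_dist E x y = 3"
    then have "E\<^sup>*\<^sup>* x y" using connected unfolding connected_graph_def black_def by blast
    then obtain a b where ab: "E x a" "E a b" "E b y" using path_of_graph_dist_3[OF _ xy(3)] by blast
    then show "\<exists>a b. E x a \<and> E a b \<and> E b y \<and>
        ((turns_left rho x a b \<and> turns_left rho a b y) \<or>
         (turns_right rho x a b \<and> turns_right rho a b y))"
      using black_path_turns[OF xy(1,2) ab] by blast
  qed
qed

end
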